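(* Let $G=(V,E)$ be a finite connected graph and $A$ an irreducible, lazy transition matrix on $V$, with $E_A=\{(i,j)\in V\times V:A(i,j)>0\}$. Suppose $x\in S^{(i)}$ and $v\in V$. Then there exist a finite integer $\sigma(i)$ and a sequence $(i_1=v,i_2,\dots,i_{\sigma(i)}=i)\in V^{\sigma(i)}$ with $(i_j,i_{j+1})\in E_A$ for all $j$, such that $$T_{i_{\sigma(i)}}\cdots T_{i_1}x\in S^{(i)}.$$
   Context: $S=(-\mathbb{N}_0)^V$ and $S^{(i)}=\{x\in S:x_i=0\}$. For $x\in S$ and $i\in V$, $T_ix\in S$ is obtained by first setting $x'_i=\max\{x_k:\operatorname{dist}(k,i)\le1\}+1$, $x'_j=x_j$ for $j\ne i$ (dist the graph distance in $G$), and then $(T_ix)_j=x'_j-\max_kx'_k$. Irreducible: for all $v\neq v'$ there is $s$ with $A^s(v,v')>0$; lazy: $A(v,v)>0$ for all $v$. *)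

theory Defs
  imports Main "HOL-Library.Extended_Nat"
begin

definition simple_graph :: "('v \<Rightarrow> 'v \<Rightarrow> bool) \<Rightarrow> bool" where
  "simple_graph E \<longleftrightarrow> (\<forall>u w. E u w \<longrightarrow> E w u) \<and> (\<forall>u. \<not> E u u)"

definition connected_graph :: "('v \<Rightarrow> 'v \<Rightarrow> bool) \<Rightarrow> bool" where
  "connected_graph E \<longleftrightarrow> (\<forall>u w. E\<^sup>*\<^sup>* u w)"

definition gdist :: "('v \<Rightarrow> 'v \<Rightarrow> bool) \<Rightarrow> 'v \<Rightarrow> 'v \<Rightarrow> enat" where
  "gdist E u w = (INF n \<in> {n. (E ^^ n) u w}. enat n)"

definition stochastic :: "('v::finite \<Rightarrow> 'v \<Rightarrow> real) \<Rightarrow> bool" where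
  "stochastic A \<longleftrightarrow> (\<forall>i j. A i j \<ge> 0) \<and> (\<forall>i. (\<Sum>j\<in>UNIV. A i j) = 1)"

fun matpow :: "('v::finite \<Rightarrow> 'v \<Rightarrow> real) \<Rightarrow> nat \<Rightarrow> 'v \<Rightarrow> 'v \<Rightarrow> real" where
  "matpow A 0 = (\<lambda>i j. if i = j then 1 else 0)"
| "matpow A (Suc n) = (\<lambda>i j. \<Sum>k\<in>UNIV. matpow A n i k * A k j)"

definition irreducible_mat :: "('v::finite \<Rightarrow> 'v \<Rightarrow> real) \<Rightarrow> bool" where
  "irreducible_mat A \<longleftrightarrow> (\<forall>v v'. v \<noteq> v' \<longrightarrow> (\<exists>s. matpow A s v v' > 0))"

definition lazy_mat :: "('v \<Rightarrow> 'v \<Rightarrow> real) \<Rightarrow> bool" where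
  "lazy_mat A \<longleftrightarrow> (\<forall>v. A v v > 0)"

definition Sset :: "('v \<Rightarrow> int) set" where
  "Sset = {x. \<forall>j. x j \<le> 0}"

definition Si :: "'v \<Rightarrow> ('v \<Rightarrow> int) set" where
  "Si i = {x \<in> Sset. x i = 0}"

definition Tmap :: "('v::finite \<Rightarrow> 'v \<Rightarrow> bool) \<Rightarrow> 'v \<Rightarrow> ('v \<Rightarrow> int) \<Rightarrow> ('v \<Rightarrow> int)" where
  "Tmap E i x = (let x' = x(i := Max {x k | k. gdist E k i \<le> 1} + 1)
                 in (\<lambda>j. x' j - Max (range x')))"

end

theory Submission
  imports Defs
begin

text \<open>
  Irreducibility gives a walk from \<open>v\<close> to \<open>i\<close> along positive entries of \<open>A\<close>; after
  following it, laziness lets the walk stay at \<open>i\<close>. Each application of \<open>T\<^sub>i\<close> lifts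
  \<open>x\<^sub>i\<close> above its closed neighbourhood and renormalises the maximum to \<open>0\<close>, so the gap
  \<open>max x - x\<^sub>i\<close> drops by at least one until it vanishes, and then the state lies in \<open>S\<^sup>(\<^sup>i\<^sup>)\<close>.
\<close>

lemma matpow_nonneg:
  assumes "\<forall>i j. A i j \<ge> 0"
  shows "matpow A s u w \<ge> 0"
  using assms by (induction s arbitrary: w) (auto intro!: sum_nonneg mult_nonneg_nonneg)

lemma matpow_pos_imp_rtranclp:
  fixes A :: "'v::finite \<Rightarrow> 'v \<Rightarrow> real"
  assumes nonneg: "\<forall>i j. A i j \<ge> 0" and "matpow A s u w > 0"
  shows "(\<lambda>a b. A a b > 0)\<^sup>*\<^sup>* u w"
  using assms(2)
proof (induction s arbitrary: w)
  case 0
  then show ?case by (simp split: if_splits)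
next
  case (Suc s)
  then have "0 < (\<Sum>k\<in>UNIV. matpow A s u k * A k w)" by simp
  then obtain k where k: "0 < matpow A s u k * A k w"
    using sum_nonpos[of UNIV "\<lambda>k. matpow A s u k * A k w"] by (meson not_le)
  have "0 \<le> matpow A s u k" "0 \<le> A k w"
    using matpow_nonneg[OF nonneg] nonneg by auto
  with k have "matpow A s u k > 0" "A k w > 0"
    by (simp_all add: zero_less_mult_iff)
  with Suc.IH show ?case by (blast intro: rtranclp.rtrancl_into_rtrancl)
qed

lemma irreducible_mat_rtranclp:
  fixes A :: "'v::finite \<Rightarrow> 'v \<Rightarrow> real"
  assumes "stochastic A" and "irreducible_mat A"
  shows "(\<lambda>a b. A a b > 0)\<^sup>*\<^sup>* u w"
proof (cases "u = w")
  case False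
  with assms(2) obtain s where "matpow A s u w > 0"
    unfolding irreducible_mat_def by blast
  moreover have "\<forall>i j. A i j \<ge> 0"
    using assms(1) unfolding stochastic_def by blast
  ultimately show ?thesis
    by (rule matpow_pos_imp_rtranclp[rotated])
qed simp

lemma rtranclp_imp_path:
  assumes "R\<^sup>*\<^sup>* u w"
  shows "\<exists>xs. xs \<noteq> [] \<and> hd xs = u \<and> last xs = w \<and> successively R xs"
  using assms
proof (induction rule: rtranclp_induct)
  case base
  then show ?case by (intro exI[of _ "[u]"]) simp
next
  case (step b c)
  then obtain xs where "xs \<noteq> []" "hd xs = u" "last xs = b" "successively R xs" by blast
  with step.hyps(2) show ?case
    by (intro exI[of _ "xs @ [c]"]) (simp add: successively_append_iff)
qed

definition top_gap :: "'v::finite \<Rightarrow> ('v \<Rightarrow> int) \<Rightarrow> int" where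
  "top_gap i y = Max (range y) - y i"

lemma gdist_self_le_one: "gdist E i i \<le> 1"
proof -
  have "gdist E i i \<le> enat 0"
    unfolding gdist_def by (rule INF_lower) simp
  then show ?thesis by (simp add: zero_enat_def[symmetric])
qed

lemma Tmap_nonpos_Max_top_gap:
  fixes y :: "'v::finite \<Rightarrow> int"
  shows "Tmap E i y \<in> Sset" and "Max (range (Tmap E i y)) = 0"
    and "top_gap i (Tmap E i y) \<le> max 0 (top_gap i y - 1)"
proof -
  define N where "N = Max {y k | k. gdist E k i \<le> 1}"
  define y' where "y' = y(i := N + 1)"
  define M where "M = Max (range y')"
  have T: "Tmap E i y = (\<lambda>j. y' j - M)"
    unfolding Tmap_def N_def y'_def M_def by (simp add: Let_def)
  have "y i \<le> N"
    unfolding N_def using gdist_self_le_one[of E i] by (intro Max_ge) auto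
  have "M \<in> range y'"
    unfolding M_def by (rule Max_in) simp_all
  then obtain j0 where j0: "y' j0 = M" by auto
  have "y' j \<le> M" for j
    unfolding M_def by simp
  then show S: "Tmap E i y \<in> Sset"
    unfolding Sset_def T by simp
  have "Tmap E i y j0 = 0"
    using j0 T by simp
  then show Max0: "Max (range (Tmap E i y)) = 0"
    using S unfolding Sset_def by (intro antisym) simp_all
  have "M \<le> max (N + 1) (N + top_gap i y)"
  proof (cases "j0 = i")
    case False
    then have "M = y j0"
      using j0 by (simp add: y'_def)
    also have "\<dots> \<le> Max (range y)" by simp
    finally show ?thesis
      using \<open>y i \<le> N\<close> unfolding top_gap_def by linarith
  qed (use j0 in \<open>simp add: y'_def\<close>)
  moreover have "top_gap i (Tmap E i y) = M - (N + 1)"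
    using Max0 T by (simp add: top_gap_def y'_def)
  ultimately show "top_gap i (Tmap E i y) \<le> max 0 (top_gap i y - 1)"
    by simp
qed

lemma top_gap_funpow_Tmap:
  "top_gap i ((Tmap E i ^^ Suc m) y) \<le> max 0 (top_gap i y - int m - 1)"
proof (induction m)
  case 0
  then show ?case using Tmap_nonpos_Max_top_gap(3) by simp
next
  case (Suc m)
  have "top_gap i ((Tmap E i ^^ Suc (Suc m)) y) \<le> max 0 (top_gap i ((Tmap E i ^^ Suc m) y) - 1)"
    using Tmap_nonpos_Max_top_gap(3)[where y = "(Tmap E i ^^ Suc m) y"]
    by (simp only: funpow.simps comp_apply)
  with Suc.IH show ?case by simp
qed

lemma funpow_Tmap_in_Si:
  assumes "top_gap i y \<le> int m"
  shows "(Tmap E i ^^ Suc m) y \<in> Si i"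
proof -
  define z where "z = (Tmap E i ^^ Suc m) y"
  have "z = Tmap E i ((Tmap E i ^^ m) y)"
    unfolding z_def by simp
  then have "z \<in> Sset" "Max (range z) = 0"
    using Tmap_nonpos_Max_top_gap(1,2) by blast+
  moreover have "top_gap i z \<le> 0"
    unfolding z_def using top_gap_funpow_Tmap[where i = i and E = E and m = m and y = y] assms
    by simp
  ultimately show ?thesis
    unfolding z_def[symmetric] Si_def Sset_def top_gap_def by (simp add: antisym)
qed

lemma fold_replicate: "fold f (replicate m a) x = (f a ^^ m) x"
  by (induction m arbitrary: x) (simp_all add: funpow_swap1)

theorem mainTheorem9:
  fixes E :: "'v::finite \<Rightarrow> 'v \<Rightarrow> bool" and A :: "'v \<Rightarrow> 'v \<Rightarrow> real"
    and x :: "'v \<Rightarrow> int" and i v :: 'v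
  assumes "simple_graph E" and "connected_graph E"
    and "stochastic A" and "irreducible_mat A" and "lazy_mat A"
    and "x \<in> Si i"
  shows "\<exists>is. is \<noteq> [] \<and> hd is = v \<and> last is = i
           \<and> (\<forall>j. Suc j < length is \<longrightarrow> A (is ! j) (is ! Suc j) > 0)
           \<and> fold (Tmap E) is x \<in> Si i"
proof -
  let ?R = "\<lambda>a b. A a b > 0"
  obtain ws where ws: "ws \<noteq> []" "hd ws = v" "last ws = i" "successively ?R ws"
    using rtranclp_imp_path[OF irreducible_mat_rtranclp[OF assms(3,4)]] by blast
  define m where "m = nat (top_gap i (fold (Tmap E) ws x))"
  define L where "L = ws @ replicate (Suc m) i"
  have "A i i > 0"
    using assms(5) unfolding lazy_mat_def by blast
  then have "successively ?R (replicate (Suc m) i)"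
    by (simp add: successively_conv_nth del: replicate_Suc)
  with ws \<open>A i i > 0\<close> have "successively ?R L"
    unfolding L_def by (simp add: successively_append_iff)
  moreover have "fold (Tmap E) L x \<in> Si i"
    unfolding L_def fold_append fold_replicate comp_def m_def
    by (rule funpow_Tmap_in_Si) simp
  ultimately show ?thesis
    using ws by (intro exI[of _ L]) (simp add: L_def successively_conv_nth)
qed

end
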